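(* Let $S$ be a semigroup, $\Lambda$ a row-finite $k$-graph and $\eta:\Lambda\to S$ a functor, and suppose there is a map $\phi:S\to\mathbb{Z}^k$ such that $d=\phi\circ\eta$. Then the skew product graph $\Lambda\times_\eta S$ is aperiodic.
   Context: All semigroups are countable, cancellative, with identity. A $k$-graph is a countable category $\Lambda$ with a functor $d:\Lambda\to\mathbb{N}^k$ with unique factorisation; $\Lambda^n=d^{-1}(n)$, $\Lambda^0$ = vertices, $v\Lambda=\{\lambda:r(\lambda)=v\}$; row-finite: $v\Lambda^n$ finite. The skew product $\Lambda\times_\eta S$ has vertices $\Lambda^0\times S$, morphisms $\Lambda\times S$, $r(\lambda,t)=(r(\lambda),t)$, $s(\lambda,t)=(s(\lambda),t\eta(\lambda))$, $(\lambda,t)(\mu,t\eta(\lambda))=(\lambda\mu,t)$, $d(\lambda,t)=d(\lambda)$. For $\lambda$ and $m\le n\le d(\lambda)$, $\lambda(m,n)$ is the unique path of degree $n-m$ with $\lambda=\lambda'\lambda(m,n)\lambda''$, $d(\lambda')=m$. A $k$-graph $\Gamma$ is aperiodic if for every $v\in\Gamma^0$ and all $m\neq n\in\mathbb{N}^k$ there is $\lambda\in v\Gamma$ with $d(\lambda)\ge m\vee n$ and $\lambda(m,m+d(\lambda)-(m\vee n))\ne\lambda(n,n+d(\lambda)-(m\vee n))$, where $(m\vee n)_i=\max\{m_i,n_i\}$.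
   Formalization: The row-finite k-graph Lambda also has no sources: the set $v\Lambda^n$ is nonempty for every vertex v and every n in $\mathbb{N}^k$. The paper assumes this as well. *)

theory Defs
  imports Main "HOL-Library.Countable_Set"
begin

text \<open>A k-graph is given by its set of morphisms Mor, range and source maps r, s
(vertices are identified with identity morphisms, i.e. elements x of Mor with r x = x),
a partial composition cmp (meaningful when s x = r y), and a degree functor
d into N^k, where N^k is modelled as 'k \<Rightarrow> nat for a finite index type 'k
(so k = CARD('k)).\<close>

definition kgraph ::
  "'a set \<Rightarrow> ('a \<Rightarrow> 'a) \<Rightarrow> ('a \<Rightarrow> 'a) \<Rightarrow> ('a \<Rightarrow> 'a \<Rightarrow> 'a) \<Rightarrow> ('a \<Rightarrow> 'k::finite \<Rightarrow> nat) \<Rightarrow> bool"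
where
  "kgraph Mor r s cmp d \<longleftrightarrow>
     countable Mor \<and>
     (\<forall>x\<in>Mor. r x \<in> Mor \<and> s x \<in> Mor \<and>
        r (r x) = r x \<and> s (r x) = r x \<and> r (s x) = s x \<and> s (s x) = s x) \<and>
     (\<forall>x\<in>Mor. \<forall>y\<in>Mor. s x = r y \<longrightarrow>
        cmp x y \<in> Mor \<and> r (cmp x y) = r x \<and> s (cmp x y) = s y) \<and>
     (\<forall>x\<in>Mor. cmp (r x) x = x \<and> cmp x (s x) = x) \<and>
     (\<forall>x\<in>Mor. \<forall>y\<in>Mor. \<forall>z\<in>Mor. s x = r y \<longrightarrow> s y = r z \<longrightarrow>
        cmp (cmp x y) z = cmp x (cmp y z)) \<and>
     (\<forall>x\<in>Mor. \<forall>y\<in>Mor. s x = r y \<longrightarrow> d (cmp x y) = (\<lambda>i. d x i + d y i)) \<and>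
     (\<forall>l\<in>Mor. \<forall>m n. d l = (\<lambda>i. m i + n i) \<longrightarrow>
        (\<exists>!p. fst p \<in> Mor \<and> snd p \<in> Mor \<and> s (fst p) = r (snd p) \<and>
              cmp (fst p) (snd p) = l \<and> d (fst p) = m \<and> d (snd p) = n))"

definition kvertices :: "'a set \<Rightarrow> ('a \<Rightarrow> 'a) \<Rightarrow> 'a set" where
  "kvertices Mor r = {x \<in> Mor. r x = x}"

definition row_finite ::
  "'a set \<Rightarrow> ('a \<Rightarrow> 'a) \<Rightarrow> ('a \<Rightarrow> 'k \<Rightarrow> nat) \<Rightarrow> bool" where
  "row_finite Mor r d \<longleftrightarrow>
     (\<forall>v\<in>kvertices Mor r. \<forall>n. finite {l \<in> Mor. r l = v \<and> d l = n})"

definition no_sources ::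
  "'a set \<Rightarrow> ('a \<Rightarrow> 'a) \<Rightarrow> ('a \<Rightarrow> 'k \<Rightarrow> nat) \<Rightarrow> bool" where
  "no_sources Mor r d \<longleftrightarrow>
     (\<forall>v\<in>kvertices Mor r. \<forall>n. {l \<in> Mor. r l = v \<and> d l = n} \<noteq> {})"

definition kfunctor ::
  "'a set \<Rightarrow> ('a \<Rightarrow> 'a) \<Rightarrow> ('a \<Rightarrow> 'a) \<Rightarrow> ('a \<Rightarrow> 'a \<Rightarrow> 'a) \<Rightarrow> ('a \<Rightarrow> 's::monoid_mult) \<Rightarrow> bool"
where
  "kfunctor Mor r s cmp eta \<longleftrightarrow>
     (\<forall>v\<in>kvertices Mor r. eta v = 1) \<and>
     (\<forall>x\<in>Mor. \<forall>y\<in>Mor. s x = r y \<longrightarrow> eta (cmp x y) = eta x * eta y)"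

definition cancellative_monoid :: "'s::monoid_mult itself \<Rightarrow> bool" where
  "cancellative_monoid _ \<longleftrightarrow>
     countable (UNIV :: 's set) \<and>
     (\<forall>a b c :: 's. a * b = a * c \<longrightarrow> b = c) \<and>
     (\<forall>a b c :: 's. b * a = c * a \<longrightarrow> b = c)"

definition skew_r :: "('a \<Rightarrow> 'a) \<Rightarrow> 'a \<times> 's \<Rightarrow> 'a \<times> 's" where
  "skew_r r = (\<lambda>(l, t). (r l, t))"

definition skew_s :: "('a \<Rightarrow> 'a) \<Rightarrow> ('a \<Rightarrow> 's::monoid_mult) \<Rightarrow> 'a \<times> 's \<Rightarrow> 'a \<times> 's" where
  "skew_s s eta = (\<lambda>(l, t). (s l, t * eta l))"

definition skew_comp :: "('a \<Rightarrow> 'a \<Rightarrow> 'a) \<Rightarrow> 'a \<times> 's \<Rightarrow> 'a \<times> 's \<Rightarrow> 'a \<times> 's" where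
  "skew_comp cmp = (\<lambda>(l, t) (m, u). (cmp l m, t))"

definition skew_d :: "('a \<Rightarrow> 'k \<Rightarrow> nat) \<Rightarrow> 'a \<times> 's \<Rightarrow> 'k \<Rightarrow> nat" where
  "skew_d d = (\<lambda>(l, t). d l)"

definition seg ::
  "'a set \<Rightarrow> ('a \<Rightarrow> 'a) \<Rightarrow> ('a \<Rightarrow> 'a) \<Rightarrow> ('a \<Rightarrow> 'a \<Rightarrow> 'a) \<Rightarrow> ('a \<Rightarrow> 'k \<Rightarrow> nat)
    \<Rightarrow> 'a \<Rightarrow> ('k \<Rightarrow> nat) \<Rightarrow> ('k \<Rightarrow> nat) \<Rightarrow> 'a" where
  "seg Mor r s cmp d l m n =
     (THE \<mu>. \<mu> \<in> Mor \<and> d \<mu> = (\<lambda>i. n i - m i) \<and>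
        (\<exists>l1\<in>Mor. \<exists>l2\<in>Mor. s l1 = r \<mu> \<and> s \<mu> = r l2 \<and>
            cmp (cmp l1 \<mu>) l2 = l \<and> d l1 = m))"

definition aperiodic ::
  "'a set \<Rightarrow> ('a \<Rightarrow> 'a) \<Rightarrow> ('a \<Rightarrow> 'a) \<Rightarrow> ('a \<Rightarrow> 'a \<Rightarrow> 'a) \<Rightarrow> ('a \<Rightarrow> 'k \<Rightarrow> nat) \<Rightarrow> bool" where
  "aperiodic Mor r s cmp d \<longleftrightarrow>
     (\<forall>v\<in>kvertices Mor r. \<forall>m n :: 'k \<Rightarrow> nat. m \<noteq> n \<longrightarrow>
        (let j = (\<lambda>i. max (m i) (n i)) in
         \<exists>l\<in>Mor. r l = v \<and> j \<le> d l \<and>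
           seg Mor r s cmp d l m (\<lambda>i. m i + d l i - j i)
             \<noteq> seg Mor r s cmp d l n (\<lambda>i. n i + d l i - j i)))"

end

theory Submission
  imports Defs
begin

text \<open>Choose a path \<lambda> of degree m \<or> n at the given vertex. Then \<lambda>(m,m) and \<lambda>(n,n) are the
sources of the initial segments \<lambda>(0,m) and \<lambda>(0,n), which in the skew product carry the
semigroup labels t \<eta>(\<lambda>(0,m)) and t \<eta>(\<lambda>(0,n)). Applying \<phi> to these labels recovers
the degrees m \<noteq> n, so by left cancellation the two vertices differ.\<close>

lemma kgraphD:
  assumes "kgraph Mor r s cmp d"
  shows kgraph_countable: "countable Mor"
    and kgraph_range_source: "\<And>x. x \<in> Mor \<Longrightarrow> r x \<in> Mor \<and> s x \<in> Mor \<and>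
        r (r x) = r x \<and> s (r x) = r x \<and> r (s x) = s x \<and> s (s x) = s x"
    and kgraph_comp: "\<And>x y. x \<in> Mor \<Longrightarrow> y \<in> Mor \<Longrightarrow> s x = r y \<Longrightarrow>
        cmp x y \<in> Mor \<and> r (cmp x y) = r x \<and> s (cmp x y) = s y"
    and kgraph_identity: "\<And>x. x \<in> Mor \<Longrightarrow> cmp (r x) x = x \<and> cmp x (s x) = x"
    and kgraph_assoc: "\<And>x y z. x \<in> Mor \<Longrightarrow> y \<in> Mor \<Longrightarrow> z \<in> Mor \<Longrightarrow> s x = r y \<Longrightarrow>
        s y = r z \<Longrightarrow> cmp (cmp x y) z = cmp x (cmp y z)"
    and kgraph_degree_comp: "\<And>x y. x \<in> Mor \<Longrightarrow> y \<in> Mor \<Longrightarrow> s x = r y \<Longrightarrow>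
        d (cmp x y) = (\<lambda>i. d x i + d y i)"
    and kgraph_factorisation: "\<And>l m n. l \<in> Mor \<Longrightarrow> d l = (\<lambda>i. m i + n i) \<Longrightarrow>
        (\<exists>!p. fst p \<in> Mor \<and> snd p \<in> Mor \<and> s (fst p) = r (snd p) \<and>
              cmp (fst p) (snd p) = l \<and> d (fst p) = m \<and> d (snd p) = n)"
  using assms unfolding kgraph_def by simp_all

lemma kgraph_degree_range:
  assumes kg: "kgraph Mor r s cmp d" and x: "x \<in> Mor"
  shows "d (r x) = (\<lambda>i. 0)"
proof -
  have rx: "r x \<in> Mor" "s (r x) = r x" "r (r x) = r x"
    using kgraph_range_source[OF kg x] by auto
  then have "d (r x) = d (cmp (r x) (r x))"
    using kgraph_identity[OF kg rx(1)] by simp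
  also have "\<dots> = (\<lambda>i. d (r x) i + d (r x) i)"
    using kgraph_degree_comp[OF kg rx(1) rx(1)] rx by simp
  finally show ?thesis by (simp add: fun_eq_iff)
qed

lemma kgraph_degree_source:
  assumes kg: "kgraph Mor r s cmp d" and x: "x \<in> Mor"
  shows "d (s x) = (\<lambda>i. 0)"
  using kgraph_range_source[OF kg x] kgraph_degree_range[OF kg, of "s x"] by simp

lemma kgraph_factorisation_unique:
  assumes kg: "kgraph Mor r s cmp d"
    and x: "x \<in> Mor" "y \<in> Mor" "s x = r y" and x': "x' \<in> Mor" "y' \<in> Mor" "s x' = r y'"
    and eq: "cmp x y = cmp x' y'" and deg: "d x = d x'"
  shows "x = x' \<and> y = y'"
proof -
  have "d (cmp x y) = (\<lambda>i. d x i + d y i)" "d (cmp x y) = (\<lambda>i. d x' i + d y' i)"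
    using kgraph_degree_comp[OF kg x] kgraph_degree_comp[OF kg x'] eq by auto
  then have "d y = d y'"
    using deg by (auto simp: fun_eq_iff)
  then show ?thesis
    using kgraph_factorisation[OF kg kgraph_comp[THEN conjunct1, OF kg x]
        kgraph_degree_comp[OF kg x]] x x' eq deg
    by (metis fst_conv snd_conv)
qed

lemma kgraph_degree_zero_imp_vertex:
  assumes kg: "kgraph Mor r s cmp d" and x: "x \<in> Mor" and dx: "d x = (\<lambda>i. 0)"
  shows "r x = x" "s x = x"
proof -
  have rs: "r x \<in> Mor" "s x \<in> Mor" "s (r x) = r x" "r (s x) = s x"
    and id: "cmp (r x) x = cmp x (s x)"
    using kgraph_range_source[OF kg x] kgraph_identity[OF kg x] by auto
  have "d (r x) = d x"
    using kgraph_degree_range[OF kg x] dx by simp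
  then show "r x = x" "s x = x"
    using kgraph_factorisation_unique[OF kg rs(1) x rs(3) x rs(2) rs(4)[symmetric] id] by auto
qed

lemma kgraph_factor:
  assumes kg: "kgraph Mor r s cmp d" and l: "l \<in> Mor" and m: "m \<le> d l"
  obtains a b where "a \<in> Mor" "b \<in> Mor" "s a = r b" "cmp a b = l" "d a = m"
proof -
  have "d l = (\<lambda>i. m i + (d l i - m i))"
    using m by (auto simp: le_fun_def)
  from kgraph_factorisation[OF kg l this] show ?thesis
    using that by auto
qed

lemma seg_diagonal:
  assumes kg: "kgraph Mor r s cmp d"
    and a: "a \<in> Mor" and b: "b \<in> Mor" and ab: "s a = r b"
  shows "seg Mor r s cmp d (cmp a b) (d a) (d a) = s a"
  unfolding seg_def
proof (rule the_equality)
  have sa: "s a \<in> Mor" "r (s a) = s a" "s (s a) = s a" "cmp a (s a) = a"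
    using kgraph_range_source[OF kg a] kgraph_identity[OF kg a] by auto
  show "s a \<in> Mor \<and> d (s a) = (\<lambda>i. d a i - d a i) \<and>
      (\<exists>l1\<in>Mor. \<exists>l2\<in>Mor. s l1 = r (s a) \<and> s (s a) = r l2 \<and>
         cmp (cmp l1 (s a)) l2 = cmp a b \<and> d l1 = d a)"
  proof (intro conjI bexI)
    show "cmp (cmp a (s a)) b = cmp a b" "s (s a) = r b"
      using sa ab by simp_all
  qed (use sa kgraph_degree_source[OF kg a] a b in auto)
next
  fix \<mu>
  assume "\<mu> \<in> Mor \<and> d \<mu> = (\<lambda>i. d a i - d a i) \<and>
      (\<exists>l1\<in>Mor. \<exists>l2\<in>Mor. s l1 = r \<mu> \<and> s \<mu> = r l2 \<and>
         cmp (cmp l1 \<mu>) l2 = cmp a b \<and> d l1 = d a)"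
  then obtain a' b' where \<mu>: "\<mu> \<in> Mor" "d \<mu> = (\<lambda>i. 0)"
    and a'b': "a' \<in> Mor" "b' \<in> Mor" "s a' = r \<mu>" "s \<mu> = r b'"
      "cmp (cmp a' \<mu>) b' = cmp a b" "d a' = d a"
    by auto
  have vertex: "r \<mu> = \<mu>" "s \<mu> = \<mu>"
    using kgraph_degree_zero_imp_vertex[OF kg \<mu>] by auto
  have "cmp a' \<mu> = a'"
    using kgraph_identity[OF kg a'b'(1)] a'b'(3) vertex by simp
  then have "a' = a"
    using kgraph_factorisation_unique[OF kg a'b'(1,2) _ a b ab] a'b' vertex by auto
  then show "\<mu> = s a"
    using a'b'(3) vertex by simp
qed

lemma kgraph_skew_product:
  assumes S: "countable (UNIV :: 's::monoid_mult set)"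
    and kg: "kgraph Mor r s cmp d" and eta: "kfunctor Mor r s cmp (eta :: 'a \<Rightarrow> 's)"
  shows "kgraph (Mor \<times> (UNIV :: 's set)) (skew_r r) (skew_s s eta) (skew_comp cmp) (skew_d d)"
proof -
  have eta_vertex: "eta (r x) = 1" "eta (s x) = 1" if "x \<in> Mor" for x
    using eta kgraph_range_source[OF kg that] unfolding kfunctor_def kvertices_def by auto
  have eta_comp: "eta (cmp x y) = eta x * eta y" if "x \<in> Mor" "y \<in> Mor" "s x = r y" for x y
    using eta that unfolding kfunctor_def by blast
  have factorisation:
    "\<exists>!p. fst p \<in> Mor \<times> UNIV \<and> snd p \<in> Mor \<times> UNIV \<and>
        skew_s s eta (fst p) = skew_r r (snd p) \<and> skew_comp cmp (fst p) (snd p) = (l, t) \<and>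
        skew_d d (fst p) = m \<and> skew_d d (snd p) = n"
    if l: "l \<in> Mor" and dl: "d l = (\<lambda>i. m i + n i)" for l t m n
  proof -
    obtain a b where ab: "a \<in> Mor" "b \<in> Mor" "s a = r b" "cmp a b = l" "d a = m" "d b = n"
      using kgraph_factorisation[OF kg l dl] by auto
    show ?thesis
    proof (rule ex1I[of _ "((a, t), (b, t * eta a))"])
      fix p
      assume p: "fst p \<in> Mor \<times> UNIV \<and> snd p \<in> Mor \<times> UNIV \<and>
        skew_s s eta (fst p) = skew_r r (snd p) \<and> skew_comp cmp (fst p) (snd p) = (l, t) \<and>
        skew_d d (fst p) = m \<and> skew_d d (snd p) = n"
      obtain x t1 y t2 where p_def: "p = ((x, t1), (y, t2))"
        by (metis prod.collapse)
      have xy: "x \<in> Mor" "y \<in> Mor" "s x = r y" "cmp x y = l" "d x = m" "d y = n"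
        and t: "t1 = t" "t2 = t1 * eta x"
        using p unfolding p_def by (auto simp: skew_s_def skew_r_def skew_comp_def skew_d_def)
      have "x = a \<and> y = b"
        using kgraph_factorisation_unique[OF kg xy(1-3) ab(1-3)] xy ab by simp
      then show "p = ((a, t), (b, t * eta a))"
        using p_def t by simp
    qed (use ab in \<open>auto simp: skew_s_def skew_r_def skew_comp_def skew_d_def\<close>)
  qed
  show ?thesis
    unfolding kgraph_def
    using kgraph_range_source[OF kg] kgraph_comp[OF kg] kgraph_identity[OF kg]
      kgraph_assoc[OF kg] kgraph_degree_comp[OF kg] eta_vertex eta_comp factorisation
      countable_SIGMA[OF kgraph_countable[OF kg] S]
    by (auto simp: skew_s_def skew_r_def skew_comp_def skew_d_def mult.assoc)
qed

lemma seg_skew_diagonal: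
  assumes S: "countable (UNIV :: 's::monoid_mult set)"
    and kg: "kgraph Mor r s cmp d" and eta: "kfunctor Mor r s cmp (eta :: 'a \<Rightarrow> 's)"
    and a: "a \<in> Mor" and b: "b \<in> Mor" and ab: "s a = r b"
  shows "seg (Mor \<times> (UNIV :: 's set)) (skew_r r) (skew_s s eta) (skew_comp cmp) (skew_d d)
      (cmp a b, t) (d a) (d a) = (s a, t * eta a)"
  using seg_diagonal[OF kgraph_skew_product[OF S kg eta], of "(a, t)" "(b, t * eta a)"] a b ab
  by (simp add: skew_s_def skew_r_def skew_comp_def skew_d_def)

theorem proposition3p6:
  fixes Mor :: "'a set" and r s :: "'a \<Rightarrow> 'a" and cmp :: "'a \<Rightarrow> 'a \<Rightarrow> 'a"
    and d :: "'a \<Rightarrow> 'k::finite \<Rightarrow> nat"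
    and eta :: "'a \<Rightarrow> 's::monoid_mult"
    and phi :: "'s \<Rightarrow> 'k \<Rightarrow> int"
  assumes "cancellative_monoid TYPE('s)"
    and "kgraph Mor r s cmp d"
    and "row_finite Mor r d"
    and "no_sources Mor r d"
    and "kfunctor Mor r s cmp eta"
    and "\<forall>l\<in>Mor. phi (eta l) = (\<lambda>i. int (d l i))"
  shows "aperiodic (Mor \<times> (UNIV :: 's set)) (skew_r r) (skew_s s eta) (skew_comp cmp) (skew_d d)"
  unfolding aperiodic_def Let_def
proof (intro ballI allI impI)
  fix v and m n :: "'k \<Rightarrow> nat"
  assume v: "v \<in> kvertices (Mor \<times> (UNIV :: 's set)) (skew_r r)" and "m \<noteq> n"
  obtain v0 t where v_def: "v = (v0, t)" and "v0 \<in> kvertices Mor r"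
    using v by (cases v) (auto simp: kvertices_def skew_r_def)
  let ?j = "\<lambda>i. max (m i) (n i)"
  obtain l where l: "l \<in> Mor" "r l = v0" "d l = ?j"
    using assms(4) \<open>v0 \<in> kvertices Mor r\<close> unfolding no_sources_def by blast
  have "m \<le> d l" "n \<le> d l"
    using l(3) unfolding le_fun_def by auto
  obtain a b where ab: "a \<in> Mor" "b \<in> Mor" "s a = r b" "cmp a b = l" "d a = m"
    using kgraph_factor[OF assms(2) l(1) \<open>m \<le> d l\<close>] .
  obtain a' b' where a'b': "a' \<in> Mor" "b' \<in> Mor" "s a' = r b'" "cmp a' b' = l" "d a' = n"
    using kgraph_factor[OF assms(2) l(1) \<open>n \<le> d l\<close>] .
  have S: "countable (UNIV :: 's set)" and cancel: "\<And>x y z :: 's. x * y = x * z \<Longrightarrow> y = z"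
    using assms(1) unfolding cancellative_monoid_def by blast+
  have "phi (eta a) \<noteq> phi (eta a')"
    using assms(6) ab(1,5) a'b'(1,5) \<open>m \<noteq> n\<close> by (auto simp: fun_eq_iff)
  then have "(s a, t * eta a) \<noteq> (s a', t * eta a')"
    using cancel[of t "eta a" "eta a'"] by auto
  then show "\<exists>p\<in>Mor \<times> UNIV. skew_r r p = v \<and> ?j \<le> skew_d d p \<and>
      seg (Mor \<times> UNIV) (skew_r r) (skew_s s eta) (skew_comp cmp) (skew_d d) p m
        (\<lambda>i. m i + skew_d d p i - ?j i) \<noteq>
      seg (Mor \<times> UNIV) (skew_r r) (skew_s s eta) (skew_comp cmp) (skew_d d) p n
        (\<lambda>i. n i + skew_d d p i - ?j i)"
    using seg_skew_diagonal[OF S assms(2,5) ab(1-3)] seg_skew_diagonal[OF S assms(2,5) a'b'(1-3)]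
      ab(4,5) a'b'(4,5) l v_def
    by (intro bexI[of _ "(l, t)"]) (auto simp: skew_r_def skew_d_def)
qed

end
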